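(* There exist uncountably many pairwise non-isomorphic subgroups of $\mathrm{IET}$ that are generated by $3$ elements and are solvable of derived length exactly $3$.
   Context: $\mathrm{IET}$ denotes the group of interval exchange transformations of $[0,1)$: bijections of $[0,1)$ that are orientation-preserving piecewise isometries (piecewise translations), left-continuous, with finitely many discontinuity points. *)

theory Defs
  imports "HOL-Analysis.Analysis" "HOL-Algebra.Solvable_Groups"
begin

text \<open>An interval exchange transformation of [0,1): a bijection of [0,1) which is a
  piecewise translation with finitely many pieces, the pieces being half-open
  intervals [a_i, a_(i+1)) (the standard normalisation for [0,1)).  Outside [0,1)
  we normalise the function to be the identity, so that the IETs form a group under
  composition with unit id.\<close>

definition is_iet :: "(real \<Rightarrow> real) \<Rightarrow> bool" where
  "is_iet f \<longleftrightarrow>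
     bij_betw f {0..<1} {0..<1} \<and>
     (\<forall>x. x \<notin> {0..<1} \<longrightarrow> f x = x) \<and>
     (\<exists>(a :: nat \<Rightarrow> real) (c :: nat \<Rightarrow> real) (n :: nat).
        a 0 = 0 \<and> a n = 1 \<and> (\<forall>i<n. a i < a (Suc i)) \<and>
        (\<forall>i<n. \<forall>x\<in>{a i..<a (Suc i)}. f x = x + c i))"

definition IET :: "(real \<Rightarrow> real) monoid" where
  "IET = \<lparr> carrier = {f. is_iet f}, mult = (\<lambda>f g. f \<circ> g), one = id \<rparr>"

text \<open>Derived length exactly k of the subgroup with carrier H (derived series computed
  inside IET, which agrees with the derived series of H as a group).\<close>

definition derived_length_eq :: "(real \<Rightarrow> real) set \<Rightarrow> nat \<Rightarrow> bool" where
  "derived_length_eq H k \<longleftrightarrow>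
     ((derived IET) ^^ k) H = {\<one>\<^bsub>IET\<^esub>} \<and>
     (\<forall>j<k. ((derived IET) ^^ j) H \<noteq> {\<one>\<^bsub>IET\<^esub>})"

end

(* Write [0,1) as three sheets over the circle, x = (j + t)/3.  Rotating the base circle
   by s while moving the sheet index over the base point t by an affine map j -> e t * j + c t
   of Z/3 (with e t = 1 or -1) gives interval exchanges, the skew products.  In a commutator
   of skew products the rotations cancel; in a commutator of those the signs e cancel; and
   the skew products with e = 1 and no rotation commute.  Hence every group of skew
   products has derived length at most 3.

   For b in [0, 1/8] let Gamma b be generated by the rotation by an irrational alpha and the
   two reflections j -> -j over the base interval [0, 1/4) and j -> 1 - j over [b, b + 1/4).
   An explicit double commutator moves sheet 0 over the base point b, so the derived length
   is exactly 3.  The set of n for which the first reflection commutes with the conjugate of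
   the second by the n-th power of the rotation is {n. [0, 1/4) - n alpha misses
   [b, b + 1/4) mod 1}; by Kronecker's theorem it determines b.  Such sets, taken over all
   triples of elements, form an isomorphism invariant of a group with only countably many
   members when the group is countable.  So each isomorphism class contains only countably
   many groups Gamma b, and choosing one b per class leaves uncountably many. *)

theory Submission
  imports Defs
begin

section \<open>Derived series, countability and an isomorphism invariant of groups\<close>

lemma derived_minimal:
  assumes "group G" "subgroup K G"
    and "\<And>a b. a \<in> J \<Longrightarrow> b \<in> J \<Longrightarrow> a \<otimes>\<^bsub>G\<^esub> b \<otimes>\<^bsub>G\<^esub> inv\<^bsub>G\<^esub> a \<otimes>\<^bsub>G\<^esub> inv\<^bsub>G\<^esub> b \<in> K"
  shows "derived G J \<subseteq> K"
  unfolding derived_def using assms by (intro group.generate_subgroup_incl) auto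

lemma countable_generate:
  assumes "group G" "countable S" "S \<subseteq> carrier G"
  shows "countable (generate G S)"
proof -
  interpret group G by fact
  define word where "word l = foldr (\<otimes>\<^bsub>G\<^esub>) l \<one>\<^bsub>G\<^esub>" for l
  have word_closed: "set l \<subseteq> carrier G \<Longrightarrow> word l \<in> carrier G" for l
    unfolding word_def by (induction l) auto
  have word_append:
    "set l \<subseteq> carrier G \<Longrightarrow> set l' \<subseteq> carrier G \<Longrightarrow> word (l @ l') = word l \<otimes>\<^bsub>G\<^esub> word l'"
    for l l' by (induction l) (auto simp: word_def m_assoc word_closed[unfolded word_def])
  define A where "A = S \<union> m_inv G ` S"
  have A: "A \<subseteq> carrier G" "countable A" using assms(2,3) unfolding A_def by auto
  have "generate G S \<subseteq> word ` lists A"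
  proof
    fix h assume "h \<in> generate G S"
    then show "h \<in> word ` lists A"
    proof (induction rule: generate.induct)
      case one
      show ?case by (rule image_eqI[of _ _ "[]"]) (simp_all add: word_def)
    next
      case (incl h)
      then show ?case using assms(3) by (intro image_eqI[of _ _ "[h]"]) (auto simp: word_def A_def)
    next
      case (inv h)
      then show ?case using assms(3) by (intro image_eqI[of _ _ "[inv\<^bsub>G\<^esub> h]"]) (auto simp: word_def A_def)
    next
      case (eng h1 h2)
      then obtain l1 l2 where l: "l1 \<in> lists A" "l2 \<in> lists A" "h1 = word l1" "h2 = word l2" by auto
      then have "set l1 \<subseteq> carrier G" "set l2 \<subseteq> carrier G" using A(1) by auto
      then show ?case using l word_append[of l1 l2] by (intro image_eqI[of _ _ "l1 @ l2"]) auto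
    qed
  qed
  moreover have "countable (word ` lists A)" using A(2) by simp
  ultimately show ?thesis by (rule countable_subset)
qed

lemma exp_of_derived_antimono:
  assumes "group G" "subgroup H G" "i \<le> j"
  shows "(derived G ^^ j) H \<subseteq> (derived G ^^ i) H"
  using assms(3)
proof (induction j rule: dec_induct)
  case (step j)
  interpret group G by fact
  show ?case
    using step derived_incl[OF subset_refl exp_of_derived_is_subgroup[OF assms(2)]] by auto
qed simp

definition commuting_conjugates :: "('a, 'b) monoid_scheme \<Rightarrow> 'a \<Rightarrow> 'a \<Rightarrow> 'a \<Rightarrow> nat set" where
  "commuting_conjugates G x y z =
     {n. y \<otimes>\<^bsub>G\<^esub> (x [^]\<^bsub>G\<^esub> n \<otimes>\<^bsub>G\<^esub> z \<otimes>\<^bsub>G\<^esub> inv\<^bsub>G\<^esub> (x [^]\<^bsub>G\<^esub> n)) =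
         (x [^]\<^bsub>G\<^esub> n \<otimes>\<^bsub>G\<^esub> z \<otimes>\<^bsub>G\<^esub> inv\<^bsub>G\<^esub> (x [^]\<^bsub>G\<^esub> n)) \<otimes>\<^bsub>G\<^esub> y}"

definition commuting_conjugate_sets :: "('a, 'b) monoid_scheme \<Rightarrow> nat set set" where
  "commuting_conjugate_sets G =
     (\<lambda>(x, y, z). commuting_conjugates G x y z) ` (carrier G \<times> carrier G \<times> carrier G)"

lemma commuting_conjugates_iso:
  assumes "group G" "group K" "\<phi> \<in> iso G K"
    and x: "x \<in> carrier G" and y: "y \<in> carrier G" and z: "z \<in> carrier G"
  shows "commuting_conjugates K (\<phi> x) (\<phi> y) (\<phi> z) = commuting_conjugates G x y z"
proof -
  interpret group_hom G K \<phi>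
    using assms(1-3) unfolding group_hom_def group_hom_axioms_def iso_def by simp
  have inj: "inj_on \<phi> (carrier G)" using assms(3) unfolding iso_def bij_betw_def by blast
  have conj: "\<phi> (x [^]\<^bsub>G\<^esub> n \<otimes>\<^bsub>G\<^esub> z \<otimes>\<^bsub>G\<^esub> inv\<^bsub>G\<^esub> (x [^]\<^bsub>G\<^esub> n)) =
      \<phi> x [^]\<^bsub>K\<^esub> n \<otimes>\<^bsub>K\<^esub> \<phi> z \<otimes>\<^bsub>K\<^esub> inv\<^bsub>K\<^esub> (\<phi> x [^]\<^bsub>K\<^esub> n)" for n :: nat
    using x z by (simp add: hom_nat_pow)
  have commute: "\<phi> y \<otimes>\<^bsub>K\<^esub> \<phi> w = \<phi> w \<otimes>\<^bsub>K\<^esub> \<phi> y \<longleftrightarrow> y \<otimes>\<^bsub>G\<^esub> w = w \<otimes>\<^bsub>G\<^esub> y"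
    if "w \<in> carrier G" for w
    using inj_on_eq_iff[OF inj] y that by (simp flip: hom_mult)
  have closed: "x [^]\<^bsub>G\<^esub> n \<otimes>\<^bsub>G\<^esub> z \<otimes>\<^bsub>G\<^esub> inv\<^bsub>G\<^esub> (x [^]\<^bsub>G\<^esub> n) \<in> carrier G" for n :: nat
    using x z by simp
  show ?thesis
    unfolding commuting_conjugates_def conj[symmetric] commute[OF closed] by (rule refl)
qed

lemma commuting_conjugate_sets_iso:
  assumes "group G" "group K" "G \<cong> K"
  shows "commuting_conjugate_sets G \<subseteq> commuting_conjugate_sets K"
proof
  fix T assume "T \<in> commuting_conjugate_sets G"
  then obtain x y z where xyz: "x \<in> carrier G" "y \<in> carrier G" "z \<in> carrier G"
    and T: "T = commuting_conjugates G x y z"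
    unfolding commuting_conjugate_sets_def by auto
  obtain \<phi> where \<phi>: "\<phi> \<in> iso G K" using assms(3) unfolding is_iso_def by auto
  then have "\<phi> x \<in> carrier K" "\<phi> y \<in> carrier K" "\<phi> z \<in> carrier K"
    using xyz unfolding iso_def hom_def by auto
  moreover have "T = commuting_conjugates K (\<phi> x) (\<phi> y) (\<phi> z)"
    using commuting_conjugates_iso[OF assms(1,2) \<phi> xyz] T by simp
  ultimately show "T \<in> commuting_conjugate_sets K"
    unfolding commuting_conjugate_sets_def by force
qed

lemma countable_commuting_conjugate_sets:
  "countable (carrier G) \<Longrightarrow> countable (commuting_conjugate_sets G)"
  unfolding commuting_conjugate_sets_def by simp

lemma commuting_conjugates_subgroup:
  assumes "group G" "subgroup H G" "x \<in> H"
  shows "commuting_conjugates (G\<lparr>carrier := H\<rparr>) x y z = commuting_conjugates G x y z"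
proof -
  interpret group G by fact
  interpret H: group "G\<lparr>carrier := H\<rparr>" by (rule subgroup_imp_group[OF assms(2)])
  have pow: "x [^]\<^bsub>G\<lparr>carrier := H\<rparr>\<^esub> n = x [^]\<^bsub>G\<^esub> n" for n :: nat
    by (rule nat_pow_consistent[symmetric])
  have "x [^]\<^bsub>G\<^esub> n \<in> H" for n :: nat
    using H.nat_pow_closed[of x n] assms(3) by (simp add: pow)
  then show ?thesis
    unfolding commuting_conjugates_def pow using assms(2) by simp
qed

lemma uncountable_transversal:
  assumes "equiv U r" "uncountable U" "\<And>X. X \<in> U // r \<Longrightarrow> countable X"
  shows "\<exists>V\<subseteq>U. uncountable V \<and> (\<forall>x\<in>V. \<forall>y\<in>V. (x, y) \<in> r \<longrightarrow> x = y)"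
proof (intro exI conjI ballI impI)
  define rep where "rep X = (SOME x. x \<in> X)" for X :: "'a set"
  have rep: "rep X \<in> X" if "X \<in> U // r" for X
    unfolding rep_def using in_quotient_imp_non_empty[OF assms(1) that] by (simp add: some_in_eq)
  have "inj_on rep (U // r)"
  proof (rule inj_onI)
    fix X Y assume XY: "X \<in> U // r" "Y \<in> U // r" "rep X = rep Y"
    then have "rep X \<in> X \<inter> Y" using rep[OF XY(1)] rep[OF XY(2)] by auto
    then show "X = Y" using quotient_disj[OF assms(1) XY(1,2)] by blast
  qed
  moreover have "uncountable (U // r)"
  proof
    assume "countable (U // r)"
    then have "countable (\<Union>X\<in>U // r. X)" using assms(3) by (rule countable_UN)
    then show False using assms(2) Union_quotient[OF assms(1)] by simp
  qed
  ultimately show "uncountable (rep ` (U // r))" using countable_image_inj_on by blast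
  show "rep ` (U // r) \<subseteq> U" using rep in_quotient_imp_subset[OF assms(1)] by blast
  fix x y assume xy: "x \<in> rep ` (U // r)" "y \<in> rep ` (U // r)" "(x, y) \<in> r"
  then obtain X Y where "X \<in> U // r" "Y \<in> U // r" "x = rep X" "y = rep Y" by blast
  then show "x = y" using quotient_eq_iff[OF assms(1), of X Y x y] rep xy(3) by simp
qed

section \<open>Interval exchange transformations\<close>

(* A breakpoint description of interval exchanges, easier to carry through composition and
   inversion than the ordered partition in is_iet (see translation_breaks_is_iet). *)
definition translation_breaks :: "(real \<Rightarrow> real) \<Rightarrow> real set \<Rightarrow> bool" where
  "translation_breaks f B \<longleftrightarrow> finite B \<and>
     (\<forall>x y. 0 \<le> x \<longrightarrow> x \<le> y \<longrightarrow> y < 1 \<longrightarrow> B \<inter> {x<..y} = {} \<longrightarrow> f y - y = f x - x)"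

lemma translation_breaksD:
  "translation_breaks f B \<Longrightarrow> 0 \<le> x \<Longrightarrow> x \<le> y \<Longrightarrow> y < 1 \<Longrightarrow> B \<inter> {x<..y} = {} \<Longrightarrow>
     f y - y = f x - x"
  unfolding translation_breaks_def by blast

lemma partition_less:
  fixes a :: "nat \<Rightarrow> 'a::order"
  assumes "\<forall>i<n. a i < a (Suc i)" "i < k" "k \<le> n"
  shows "a i < a k"
  using assms(2,3)
proof (induction k)
  case (Suc k)
  then show ?case using assms(1) by (cases "i = k") (auto intro: less_trans)
qed simp

lemma partition_le:
  fixes a :: "nat \<Rightarrow> 'a::order"
  assumes "\<forall>i<n. a i < a (Suc i)" "i \<le> k" "k \<le> n"
  shows "a i \<le> a k"
  using partition_less[OF assms(1), of i k] assms(2,3) by (cases "i = k") (auto simp: order_less_imp_le)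

lemma partition_piece_exists:
  fixes a :: "nat \<Rightarrow> 'a::linorder"
  shows "a 0 \<le> x \<Longrightarrow> x < a n \<Longrightarrow> \<exists>i<n. a i \<le> x \<and> x < a (Suc i)"
proof (induction n)
  case (Suc n)
  then show ?case by (cases "x < a n") (auto intro: less_SucI)
qed simp

lemma partition_piece_unique:
  fixes a :: "nat \<Rightarrow> 'a::linorder"
  assumes "\<forall>i<n. a i < a (Suc i)" "i < n" "k < n"
    and "a i \<le> x" "x < a (Suc i)" "a k \<le> x" "x < a (Suc k)"
  shows "i = k"
proof (rule ccontr)
  assume "i \<noteq> k"
  then consider "Suc i \<le> k" | "Suc k \<le> i" by linarith
  then show False
  proof cases
    case 1
    then have "a (Suc i) \<le> a k" using partition_le[OF assms(1)] assms(3) by simp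
    then show False using assms(5,6) by simp
  next
    case 2
    then have "a (Suc k) \<le> a i" using partition_le[OF assms(1)] assms(2) by simp
    then show False using assms(4,7) by simp
  qed
qed

lemma finite_strict_enumeration:
  fixes S :: "'a::linorder set"
  assumes "finite S" "S \<noteq> {}"
  obtains a n where "\<forall>i<n. a i < a (Suc i)" "a ` {..n} = S"
proof -
  define L where "L = sorted_list_of_set S"
  have L: "sorted_wrt (<) L" "set L = S" "L \<noteq> []"
    using assms unfolding L_def by auto
  have "\<forall>i<length L - 1. L ! i < L ! Suc i"
    using L(1) by (simp add: sorted_wrt_nth_less)
  moreover have "{..length L - 1} = {..<length L}" using L(3) by (cases L) auto
  then have "(!) L ` {..length L - 1} = S"
    using L(2) by (auto simp: set_conv_nth)
  ultimately show ?thesis by (rule that)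
qed

lemma iet_has_translation_breaks:
  assumes "is_iet f" shows "\<exists>B. translation_breaks f B"
proof -
  obtain a c n where a: "a 0 = 0" "a n = 1" "\<forall>i<n. a i < a (Suc i)"
    "\<forall>i<n. \<forall>x\<in>{a i..<a (Suc i)}. f x = x + c i"
    using assms unfolding is_iet_def by blast
  have "translation_breaks f (a ` {..n})"
    unfolding translation_breaks_def
  proof (intro conjI allI impI)
    fix x y :: real
    assume xy: "0 \<le> x" "x \<le> y" "y < 1" "a ` {..n} \<inter> {x<..y} = {}"
    obtain i where i: "i < n" "a i \<le> x" "x < a (Suc i)"
      using partition_piece_exists[of a x n] a xy by auto
    have "a (Suc i) \<in> a ` {..n}" using i by simp
    then have "a (Suc i) \<notin> {x<..y}" using xy(4) by blast
    then have "y < a (Suc i)" using i by auto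
    then show "f y - y = f x - x" using a(4) i xy by auto
  qed simp
  then show ?thesis by blast
qed

lemma translation_breaks_is_iet:
  assumes "bij_betw f {0..<1} {0..<1}" "\<forall>x. x \<notin> {0..<1} \<longrightarrow> f x = x"
    and B: "translation_breaks f B"
  shows "is_iet f"
proof -
  define S where "S = {0, 1} \<union> (B \<inter> {0<..<1::real})"
  have S01: "S \<subseteq> {0..1}" unfolding S_def by auto
  have "finite S" "S \<noteq> {}" using B unfolding S_def translation_breaks_def by auto
  then obtain a n where mono: "\<forall>i<n. a i < a (Suc i)" and aS: "a ` {..n} = S"
    by (rule finite_strict_enumeration)
  have a_le: "i \<le> k \<Longrightarrow> k \<le> n \<Longrightarrow> a i \<le> a k" for i k using partition_le[OF mono] .
  have a01: "i \<le> n \<Longrightarrow> 0 \<le> a i \<and> a i \<le> 1" for i using aS S01 by auto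
  have "0 \<in> a ` {..n}" "1 \<in> a ` {..n}" using aS unfolding S_def by auto
  then obtain k0 k1 where k: "k0 \<le> n" "a k0 = 0" "k1 \<le> n" "a k1 = 1" by auto
  have a0: "a 0 = 0" using a_le[of 0 k0] a01[of 0] k by simp
  have an: "a n = 1" using a_le[of k1 n] a01[of n] k by simp
  have pieces: "f x = x + (f (a i) - a i)" if i: "i < n" and x: "x \<in> {a i..<a (Suc i)}" for i x
  proof -
    have "B \<inter> {a i<..x} = {}"
    proof (rule ccontr)
      assume "B \<inter> {a i<..x} \<noteq> {}"
      then obtain b where b: "b \<in> B" "a i < b" "b \<le> x" by auto
      then have "b \<in> S" using a01[of i] a01[of "Suc i"] i x unfolding S_def by auto
      then obtain k where k: "k \<le> n" "a k = b" using aS by auto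
      show False
      proof (cases "k \<le> i")
        case True
        then show False using a_le[of k i] i k b by simp
      next
        case False
        then show False using a_le[of "Suc i" k] k b x by simp
      qed
    qed
    then show ?thesis using translation_breaksD[OF B, of "a i" x] a01[of i] a01[of "Suc i"] i x by auto
  qed
  have "\<exists>a c n. a 0 = 0 \<and> a n = 1 \<and> (\<forall>i<n. a i < a (Suc i)) \<and>
      (\<forall>i<n. \<forall>x\<in>{a i..<a (Suc i)}. f x = x + c i)"
    by (rule exI[of _ a], rule exI[of _ "\<lambda>i. f (a i) - a i"], rule exI[of _ n])
      (use a0 an mono pieces in blast)
  then show ?thesis unfolding is_iet_def using assms(1,2) by blast
qed

lemma iet_bij_betw: "is_iet f \<Longrightarrow> bij_betw f {0..<1} {0..<1}"
  unfolding is_iet_def by blast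

lemma iet_fixes: "is_iet f \<Longrightarrow> x \<notin> {0..<1} \<Longrightarrow> f x = x"
  unfolding is_iet_def by blast

lemma iet_maps_to: "is_iet f \<Longrightarrow> x \<in> {0..<1} \<Longrightarrow> f x \<in> {0..<1}"
  using iet_bij_betw bij_betwE by blast

lemma iet_id: "is_iet id"
  unfolding is_iet_def
  by (intro conjI) (simp, simp, rule exI[of _ real], rule exI[of _ "\<lambda>i. 0"], rule exI[of _ 1], simp)

lemma iet_comp:
  assumes f: "is_iet f" and g: "is_iet g" shows "is_iet (f \<circ> g)"
proof -
  obtain Bf Bg where Bf: "translation_breaks f Bf" and Bg: "translation_breaks g Bg"
    using iet_has_translation_breaks f g by blast
  have injg: "inj_on g {0..<1}" using iet_bij_betw[OF g] bij_betw_def by blast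
  define B where "B = Bg \<union> (g -` Bf \<inter> {0..<1})"
  have "translation_breaks (f \<circ> g) B" unfolding translation_breaks_def
  proof (intro conjI allI impI)
    show "finite B" unfolding B_def using Bf Bg injg finite_vimage_IntI
      unfolding translation_breaks_def by blast
    fix x y :: real
    assume xy: "0 \<le> x" "x \<le> y" "y < 1" "B \<inter> {x<..y} = {}"
    have Bg_xy: "Bg \<inter> {x<..y} = {}" using xy unfolding B_def by auto
    have dg: "g y - y = g x - x" using translation_breaksD[OF Bg] xy Bg_xy by blast
    have "Bf \<inter> {g x<..g y} = {}"
    proof (rule ccontr)
      assume "Bf \<inter> {g x<..g y} \<noteq> {}"
      then obtain b where b: "b \<in> Bf" "g x < b" "b \<le> g y" by auto
      define z where "z = b - (g x - x)"
      have z: "x < z" "z \<le> y" using b dg unfolding z_def by auto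
      have "Bg \<inter> {x<..z} = {}" using Bg_xy z by auto
      then have "g z - z = g x - x"
        using translation_breaksD[OF Bg, of x z] xy z by auto
      then have "g z = b" unfolding z_def by simp
      then have "z \<in> B" unfolding B_def using z xy b by auto
      then show False using xy z by auto
    qed
    then have "f (g y) - g y = f (g x) - g x"
      using translation_breaksD[OF Bf, of "g x" "g y"] iet_maps_to[OF g] dg xy by auto
    then show "(f \<circ> g) y - y = (f \<circ> g) x - x" using dg by simp
  qed
  moreover have "bij_betw (f \<circ> g) {0..<1} {0..<1}"
    using bij_betw_trans iet_bij_betw f g by blast
  ultimately show ?thesis
    using translation_breaks_is_iet iet_fixes[OF f] iet_fixes[OF g] by simp
qed

lemma iet_bij:
  assumes f: "is_iet f" shows "bij f"
proof -
  have "bij_betw f (- {0..<1}) (- {0..<1})"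
    by (rule bij_betw_cong[where g = id, THEN iffD2]) (simp_all add: iet_fixes[OF f])
  then have "bij_betw f ({0..<1} \<union> - {0..<1}) ({0..<1} \<union> - {0..<1})"
    using iet_bij_betw[OF f] by (intro bij_betw_combine) auto
  then show ?thesis by simp
qed

lemma iet_inv:
  assumes f: "is_iet f" shows "is_iet (inv_into UNIV f)"
proof -
  define g where "g = inv_into UNIV f"
  have gf: "g (f x) = x" and fg: "f (g x) = x" for x
    unfolding g_def using iet_bij[OF f] by (simp_all add: bij_is_inj bij_is_surj f_inv_into_f)
  have g_fixes: "g x = x" if "x \<notin> {0..<1}" for x using gf[of x] iet_fixes[OF f that] by simp
  have g_maps_to: "g x \<in> {0..<1}" if "x \<in> {0..<1}" for x
    using g_fixes fg that by metis
  obtain a c n where a: "a 0 = 0" "a n = 1" "\<forall>i<n. a i < a (Suc i)"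
    "\<forall>i<n. \<forall>x\<in>{a i..<a (Suc i)}. f x = x + c i"
    using f unfolding is_iet_def by blast
  define I where "I i = {a i + c i..<a (Suc i) + c i}" for i
  have g_on_I: "g u = u - c i" if "i < n" "u \<in> I i" for i u
    using a(4) gf[of "u - c i"] that unfolding I_def by force
  have I_cover: "\<exists>i<n. u \<in> I i" if u: "u \<in> {0..<1}" for u
  proof -
    obtain i where i: "i < n" "a i \<le> g u" "g u < a (Suc i)"
      using partition_piece_exists[of a "g u" n] a g_maps_to[OF u] by auto
    then have "u = g u + c i" using a(4) fg[of u] by simp
    then show ?thesis using i unfolding I_def by auto
  qed
  have I_disjoint: "i = k" if "i < n" "k < n" "u \<in> I i" "u \<in> I k" for i k u
    using partition_piece_unique[OF a(3) that(1,2), of "u - c i"] g_on_I[of i u] g_on_I[of k u] that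
    unfolding I_def by auto
  define B where "B = (\<lambda>i. a i + c i) ` {..<n}"
  have "translation_breaks g B" unfolding translation_breaks_def
  proof (intro conjI allI impI)
    show "finite B" unfolding B_def by simp
    fix u v :: real
    assume uv: "0 \<le> u" "u \<le> v" "v < 1" "B \<inter> {u<..v} = {}"
    obtain i where i: "i < n" "u \<in> I i" using I_cover[of u] uv by force
    \<comment> \<open>Otherwise the right end of I i lies in some I k starting strictly below it,
      and I k would overlap I i.\<close>
    have "v \<in> I i"
    proof (rule ccontr)
      define w where "w = a (Suc i) + c i"
      assume "v \<notin> I i"
      then have w: "u < w" "w \<le> v" using i uv unfolding I_def w_def by auto
      then obtain k where k: "k < n" "w \<in> I k" using I_cover[of w] uv by force
      have "w \<notin> B" using uv w by auto
      then have "a k + c k < w" using k unfolding I_def B_def by auto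
      then have "max u (a k + c k) \<in> I i" "max u (a k + c k) \<in> I k"
        using i k w unfolding I_def w_def by auto
      then have "i = k" using I_disjoint i k by blast
      then show False using k unfolding I_def w_def by simp
    qed
    then show "g v - v = g u - u" using g_on_I i by simp
  qed
  moreover have "bij_betw g {0..<1} {0..<1}"
  proof (rule bij_betw_byWitness[where f' = f])
    show "g ` {0..<1} \<subseteq> {0..<1}" using g_maps_to by blast
    show "f ` {0..<1} \<subseteq> {0..<1}" using iet_maps_to[OF f] by blast
  qed (simp_all add: gf fg)
  ultimately have "is_iet g" using translation_breaks_is_iet[of g B] g_fixes by blast
  then show ?thesis by (simp add: g_def)
qed

lemma in_carrier_IET [simp]: "f \<in> carrier IET \<longleftrightarrow> is_iet f"
  unfolding IET_def by simp

lemma mult_IET [simp]: "f \<otimes>\<^bsub>IET\<^esub> g = f \<circ> g"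
  unfolding IET_def by simp

lemma one_IET [simp]: "\<one>\<^bsub>IET\<^esub> = id"
  unfolding IET_def by simp

lemma group_IET: "group IET"
proof (rule groupI)
  show "\<exists>y\<in>carrier IET. y \<otimes>\<^bsub>IET\<^esub> x = \<one>\<^bsub>IET\<^esub>" if "x \<in> carrier IET" for x
    using that iet_inv iet_bij by (auto intro!: bexI[of _ "inv_into UNIV x"] simp: bij_is_inj)
qed (auto simp: iet_comp iet_id comp_assoc)

interpretation IET: group IET
  by (rule group_IET)

lemma inv_IET: "is_iet f \<Longrightarrow> inv\<^bsub>IET\<^esub> f = inv_into UNIV f"
  using iet_inv iet_bij by (intro IET.inv_equality) (auto simp: bij_is_inj)

lemma inv_IET_eqI: "is_iet f \<Longrightarrow> g \<circ> f = id \<Longrightarrow> is_iet g \<Longrightarrow> inv\<^bsub>IET\<^esub> f = g"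
  by (intro IET.inv_equality) auto

lemma inv_IET_comp: "is_iet f \<Longrightarrow> is_iet g \<Longrightarrow> inv\<^bsub>IET\<^esub> (f \<circ> g) = inv\<^bsub>IET\<^esub> g \<circ> inv\<^bsub>IET\<^esub> f"
  using IET.inv_mult_group[of f g] by simp

lemma commutator_IET:
  "is_iet a \<Longrightarrow> is_iet b \<Longrightarrow>
     a \<otimes>\<^bsub>IET\<^esub> b \<otimes>\<^bsub>IET\<^esub> inv\<^bsub>IET\<^esub> a \<otimes>\<^bsub>IET\<^esub> inv\<^bsub>IET\<^esub> b =
     a \<circ> b \<circ> inv_into UNIV a \<circ> inv_into UNIV b"
  by (simp add: inv_IET)

lemma derived_length_eqI:
  assumes "subgroup H IET" "(derived IET ^^ Suc k) H = {\<one>\<^bsub>IET\<^esub>}"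
    and "d \<in> (derived IET ^^ k) H" "d \<noteq> \<one>\<^bsub>IET\<^esub>"
  shows "derived_length_eq H (Suc k)"
proof -
  have "(derived IET ^^ j) H \<noteq> {\<one>\<^bsub>IET\<^esub>}" if "j < Suc k" for j
    using exp_of_derived_antimono[OF group_IET assms(1), of j k] that assms(3,4) by auto
  then show ?thesis unfolding derived_length_eq_def using assms(2) by blast
qed

section \<open>Three sheets over the circle\<close>

(* A point of [0,1) is x = (j + t)/3 with sheet j in {0, 1, 2} and base point t in [0,1);
   sheet indices are read modulo 3. *)
definition sheet :: "real \<Rightarrow> int" where
  "sheet x = \<lfloor>3 * x\<rfloor>"

definition base :: "real \<Rightarrow> real" where
  "base x = frac (3 * x)"

definition sheet_point :: "int \<Rightarrow> real \<Rightarrow> real" where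
  "sheet_point j t = (of_int j + t) / 3"

lemma base_range: "0 \<le> base x" "base x < 1"
  unfolding base_def by (simp_all add: frac_lt_1)

lemma sheet_range: "x \<in> {0..<1} \<Longrightarrow> 0 \<le> sheet x \<and> sheet x \<le> 2"
  unfolding sheet_def by (auto simp: floor_le_iff)

lemma sheet_point_sheet_base [simp]: "sheet_point (sheet x) (base x) = x"
  unfolding sheet_point_def sheet_def base_def frac_def by simp

lemma sheet_sheet_point [simp]: "0 \<le> t \<Longrightarrow> t < 1 \<Longrightarrow> sheet (sheet_point j t) = j"
  unfolding sheet_def sheet_point_def by (simp add: floor_eq_iff)

lemma base_sheet_point [simp]:
  assumes "0 \<le> t" "t < 1"
  shows "base (sheet_point j t) = t"
proof -
  have "3 * sheet_point j t = of_int j + t" unfolding sheet_point_def by simp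
  then show ?thesis unfolding base_def using assms by (simp add: frac_eq)
qed

lemma sheet_point_mem:
  assumes "0 \<le> j" "j \<le> 2" "0 \<le> t" "t < 1"
  shows "sheet_point j t \<in> {0..<1}"
proof -
  have "0 \<le> real_of_int j" "real_of_int j \<le> 2" using assms by simp_all
  then show ?thesis using assms unfolding sheet_point_def by simp
qed

lemma sheet_point_eq_iff:
  "0 \<le> t \<Longrightarrow> t < 1 \<Longrightarrow> 0 \<le> t' \<Longrightarrow> t' < 1 \<Longrightarrow>
     sheet_point j t = sheet_point j' t' \<longleftrightarrow> j = j' \<and> t = t'"
  by (metis sheet_sheet_point base_sheet_point)

lemma sheet_mod_3 [simp]: "x \<in> {0..<1} \<Longrightarrow> sheet x mod 3 = sheet x"
  using sheet_range[of x] by simp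

lemma sheet_point_cases:
  assumes "x \<in> {0..<1}"
  obtains j t where "x = sheet_point j t" "0 \<le> j" "j \<le> 2" "0 \<le> t" "t < 1"
  using sheet_range[OF assms] base_range sheet_point_sheet_base by metis

definition rot :: "real \<Rightarrow> real \<Rightarrow> real" where
  "rot s x = (if x \<in> {0..<1} then sheet_point (sheet x) (frac (base x + s)) else x)"

definition fiber_map :: "(real \<Rightarrow> int) \<Rightarrow> (real \<Rightarrow> int) \<Rightarrow> real \<Rightarrow> real" where
  "fiber_map e c x =
     (if x \<in> {0..<1} then sheet_point ((e (base x) * sheet x + c (base x)) mod 3) (base x) else x)"

lemma rot_sheet_point [simp]:
  "0 \<le> j \<Longrightarrow> j \<le> 2 \<Longrightarrow> 0 \<le> t \<Longrightarrow> t < 1 \<Longrightarrow> rot s (sheet_point j t) = sheet_point j (frac (t + s))"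
  unfolding rot_def using sheet_point_mem by simp

lemma fiber_map_sheet_point [simp]:
  "0 \<le> j \<Longrightarrow> j \<le> 2 \<Longrightarrow> 0 \<le> t \<Longrightarrow> t < 1 \<Longrightarrow>
     fiber_map e c (sheet_point j t) = sheet_point ((e t * j + c t) mod 3) t"
  unfolding fiber_map_def using sheet_point_mem by simp

lemma rot_outside [simp]: "x \<notin> {0..<1} \<Longrightarrow> rot s x = x"
  unfolding rot_def by (rule if_not_P)

lemma fiber_map_outside [simp]: "x \<notin> {0..<1} \<Longrightarrow> fiber_map e c x = x"
  unfolding fiber_map_def by (rule if_not_P)

lemma rot_mem:
  assumes "x \<in> {0..<1}" shows "rot s x \<in> {0..<1}"
proof -
  obtain j t where "x = sheet_point j t" "0 \<le> j" "j \<le> 2" "0 \<le> t" "t < 1"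
    using assms by (rule sheet_point_cases)
  then show ?thesis using sheet_point_mem[of j "frac (t + s)"] by (simp add: frac_lt_1)
qed

lemma fiber_map_mem:
  assumes "x \<in> {0..<1}" shows "fiber_map e c x \<in> {0..<1}"
proof -
  obtain j t where "x = sheet_point j t" "0 \<le> j" "j \<le> 2" "0 \<le> t" "t < 1"
    using assms by (rule sheet_point_cases)
  then show ?thesis using sheet_point_mem[of "(e t * j + c t) mod 3" t] by simp
qed

lemma rot_rot: "rot s (rot t x) = rot (t + s) x"
proof (cases "x \<in> {0..<1}")
  case True
  then obtain j u where "x = sheet_point j u" "0 \<le> j" "j \<le> 2" "0 \<le> u" "u < 1"
    by (rule sheet_point_cases)
  then show ?thesis by (simp add: frac_lt_1 add.assoc)
qed simp

lemma rot_0: "rot 0 = id"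
proof
  fix x
  show "rot 0 x = id x"
  proof (cases "x \<in> {0..<1}")
    case True
    then obtain j u where "x = sheet_point j u" "0 \<le> j" "j \<le> 2" "0 \<le> u" "u < 1"
      by (rule sheet_point_cases)
    then show ?thesis by simp
  qed simp
qed

lemma rot_comp: "rot s \<circ> rot t = rot (t + s)"
  by (rule ext) (simp add: rot_rot)

lemma fiber_map_comp:
  "fiber_map e1 c1 (fiber_map e2 c2 x) = fiber_map (\<lambda>t. e1 t * e2 t) (\<lambda>t. e1 t * c2 t + c1 t) x"
proof (cases "x \<in> {0..<1}")
  case True
  then obtain j t where x: "x = sheet_point j t" "0 \<le> j" "j \<le> 2" "0 \<le> t" "t < 1"
    by (rule sheet_point_cases)
  have "(e1 t * ((e2 t * j + c2 t) mod 3) + c1 t) mod 3 = (e1 t * (e2 t * j + c2 t) + c1 t) mod 3"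
    by (metis mod_add_left_eq mod_mult_right_eq)
  then show ?thesis using x by (simp add: algebra_simps)
qed simp

lemma fiber_map_cancel:
  assumes "\<And>t. e t * e t = 1" "\<And>t. (e t * c' t + c t) mod 3 = 0"
  shows "fiber_map e c (fiber_map e c' x) = x"
proof (cases "x \<in> {0..<1}")
  case True
  then obtain j t where x: "x = sheet_point j t" "0 \<le> j" "j \<le> 2" "0 \<le> t" "t < 1"
    by (rule sheet_point_cases)
  have "(e t * e t * j + (e t * c' t + c t)) mod 3 = (j + (e t * c' t + c t) mod 3) mod 3"
    using assms(1)[of t] by (simp add: mod_add_right_eq)
  also have "\<dots> = j" using assms(2)[of t] x by simp
  finally show ?thesis unfolding fiber_map_comp using x by simp
qed simp

definition constant_between :: "(real \<Rightarrow> 'a) \<Rightarrow> real set \<Rightarrow> bool" where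
  "constant_between e D \<longleftrightarrow>
     (\<forall>t1 t2. 0 \<le> t1 \<longrightarrow> t1 \<le> t2 \<longrightarrow> t2 < 1 \<longrightarrow> D \<inter> {t1<..t2} = {} \<longrightarrow> e t1 = e t2)"

lemma constant_between_interval: "constant_between (\<lambda>t. if t \<in> {a..<b} then x else y) {a, b}"
  unfolding constant_between_def
proof (intro allI impI)
  fix t1 t2 :: real
  assume "0 \<le> t1" "t1 \<le> t2" "t2 < 1" "{a, b} \<inter> {t1<..t2} = {}"
  then have "t1 \<in> {a..<b} \<longleftrightarrow> t2 \<in> {a..<b}" by auto
  then show "(if t1 \<in> {a..<b} then x else y) = (if t2 \<in> {a..<b} then x else y)" by simp
qed

lemma iet_by_sheets:
  assumes "bij_betw F {0..<1} {0..<1}" "\<forall>x. x \<notin> {0..<1} \<longrightarrow> F x = x" "finite D"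
    and disp: "\<And>x y. 0 \<le> x \<Longrightarrow> x \<le> y \<Longrightarrow> y < 1 \<Longrightarrow> sheet x = sheet y \<Longrightarrow>
        D \<inter> {base x<..base y} = {} \<Longrightarrow> F y - y = F x - x"
  shows "is_iet F"
proof -
  define B where "B = {1/3, 2/3} \<union> (\<lambda>(j, d). sheet_point j d) ` ({0, 1, 2} \<times> D)"
  have "translation_breaks F B" unfolding translation_breaks_def
  proof (intro conjI allI impI)
    show "finite B" unfolding B_def using assms(3) by simp
    fix x y :: real
    assume xy: "0 \<le> x" "x \<le> y" "y < 1" "B \<inter> {x<..y} = {}"
    have x3: "of_int (sheet x) \<le> 3 * x" "3 * x < of_int (sheet x) + 1"
      unfolding sheet_def by linarith+
    have y3: "of_int (sheet y) \<le> 3 * y" using of_int_floor_le unfolding sheet_def by blast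
    have sheets: "0 \<le> sheet x" "sheet x \<le> 2" "sheet y \<le> 2" using sheet_range xy by auto
    have same: "sheet x = sheet y"
    proof (rule ccontr)
      assume "sheet x \<noteq> sheet y"
      moreover have "sheet x \<le> sheet y" unfolding sheet_def using xy by (intro floor_mono) simp
      ultimately have "sheet x + 1 \<le> sheet y" by simp
      then have "of_int (sheet x + 1) / 3 \<in> {x<..y}" using x3 y3 by (simp del: of_int_add)
      moreover have "sheet x + 1 = 1 \<or> sheet x + 1 = 2" using sheets \<open>sheet x + 1 \<le> sheet y\<close> by linarith
      then have "of_int (sheet x + 1) / 3 \<in> B" unfolding B_def by auto
      ultimately show False using xy(4) by blast
    qed
    have "D \<inter> {base x<..base y} = {}"
    proof (rule ccontr)
      assume "D \<inter> {base x<..base y} \<noteq> {}"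
      then obtain d where d: "d \<in> D" "base x < d" "d \<le> base y" by auto
      have "sheet x \<in> {0, 1, 2}" using sheets by auto
      then have "sheet_point (sheet x) d \<in> B" unfolding B_def using d by force
      moreover have "sheet_point (sheet x) d \<in> {x<..y}"
        using d same sheet_point_sheet_base[of x] sheet_point_sheet_base[of y]
        unfolding sheet_point_def by (metis add_le_cancel_left add_less_cancel_left divide_right_mono
          divide_strict_right_mono greaterThanAtMost_iff zero_less_numeral zero_le_numeral)
      ultimately show False using xy(4) by blast
    qed
    then show "F y - y = F x - x" using disp xy same by blast
  qed
  then show ?thesis using translation_breaks_is_iet assms(1,2) by blast
qed

lemma rot_iet: "is_iet (rot s)"
proof (rule iet_by_sheets[where D = "{1 - frac s}"])
  show "bij_betw (rot s) {0..<1} {0..<1}"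
  proof (rule bij_betw_byWitness[where f' = "rot (- s)"])
    show "rot s ` {0..<1} \<subseteq> {0..<1}" "rot (- s) ` {0..<1} \<subseteq> {0..<1}"
      using rot_mem by blast+
  qed (simp_all add: rot_rot rot_0)
  fix x y :: real
  assume xy: "0 \<le> x" "x \<le> y" "y < 1" "sheet x = sheet y" "{1 - frac s} \<inter> {base x<..base y} = {}"
  have base_le: "base x \<le> base y" using xy unfolding base_def sheet_def frac_def by simp
  have shift: "rot s z - z = (frac s - (if base z + frac s < 1 then 0 else 1)) / 3"
    if "z \<in> {0..<1}" for z
  proof -
    have "rot s z = sheet_point (sheet z) (frac (base z + s))" using that unfolding rot_def by simp
    then have "rot s z - z = (frac (base z + s) - base z) / 3"
      using sheet_point_sheet_base[of z] unfolding sheet_point_def by (simp only: add_divide_distrib diff_divide_distrib)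
    moreover have "frac (base z + s) = base z + frac s - (if base z + frac s < 1 then 0 else 1)"
      using frac_add[of "base z" s] base_range[of z] by (simp add: frac_eq)
    ultimately show ?thesis by simp
  qed
  have "base x + frac s < 1 \<longleftrightarrow> base y + frac s < 1" using xy base_le by auto
  then show "rot s y - y = rot s x - x" using shift[of x] shift[of y] xy by simp
qed auto

lemma inv_rot: "inv\<^bsub>IET\<^esub> (rot s) = rot (- s)"
  by (rule inv_IET_eqI) (simp_all add: rot_iet rot_comp rot_0)

lemma rot_pow: "rot s [^]\<^bsub>IET\<^esub> (n::nat) = rot (real n * s)"
  by (induction n) (simp_all add: rot_0 rot_comp algebra_simps)

lemma fiber_map_iet:
  assumes "\<And>t. e t = 1 \<or> e t = -1" "finite D" "constant_between e D" "constant_between c D"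
  shows "is_iet (fiber_map e c)"
proof (rule iet_by_sheets[where D = D])
  have "e t * e t = 1" for t using assms(1)[of t] by auto
  then show "bij_betw (fiber_map e c) {0..<1} {0..<1}"
  proof (intro bij_betw_byWitness[where f' = "fiber_map e (\<lambda>t. - (e t * c t))"])
    show "fiber_map e c ` {0..<1} \<subseteq> {0..<1}" "fiber_map e (\<lambda>t. - (e t * c t)) ` {0..<1} \<subseteq> {0..<1}"
      using fiber_map_mem by blast+
  qed (simp_all add: fiber_map_cancel mult.assoc[symmetric])
  fix x y :: real
  assume xy: "0 \<le> x" "x \<le> y" "y < 1" "sheet x = sheet y" "D \<inter> {base x<..base y} = {}"
  have "base x \<le> base y" using xy unfolding base_def sheet_def frac_def by simp
  then have ec: "e (base x) = e (base y)" "c (base x) = c (base y)"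
    using assms(3,4) xy base_range unfolding constant_between_def by blast+
  have disp: "fiber_map e c z - z =
      (of_int ((e (base z) * sheet z + c (base z)) mod 3) - of_int (sheet z)) / 3" if "z \<in> {0..<1}" for z
  proof -
    have "fiber_map e c z = sheet_point ((e (base z) * sheet z + c (base z)) mod 3) (base z)"
      using that unfolding fiber_map_def by simp
    then show ?thesis using sheet_point_sheet_base[of z] unfolding sheet_point_def by (simp only: add_divide_distrib diff_divide_distrib)
  qed
  have "fiber_map e c y - y = (of_int ((e (base y) * sheet y + c (base y)) mod 3) - of_int (sheet y)) / 3"
    using xy by (intro disp) auto
  also have "\<dots> = (of_int ((e (base x) * sheet x + c (base x)) mod 3) - of_int (sheet x)) / 3"
    using ec xy(4) by simp
  also have "\<dots> = fiber_map e c x - x"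
    using xy by (intro disp[symmetric]) auto
  finally show "fiber_map e c y - y = fiber_map e c x - x" .
qed (use assms(2) in auto)

section \<open>Skew products and the derived series\<close>

definition skew :: "(real \<Rightarrow> real) \<Rightarrow> real \<Rightarrow> (real \<Rightarrow> int) \<Rightarrow> (real \<Rightarrow> int) \<Rightarrow> bool" where
  "skew h s e c \<longleftrightarrow> (\<forall>t\<in>{0..<1}. e t = 1 \<or> e t = -1) \<and>
     (\<forall>x\<in>{0..<1}. base (h x) = frac (base x + s) \<and>
        sheet (h x) = (e (base x) * sheet x + c (base x)) mod 3)"

lemma skewD:
  assumes "skew h s e c" "x \<in> {0..<1}"
  shows "base (h x) = frac (base x + s)" "sheet (h x) = (e (base x) * sheet x + c (base x)) mod 3"
    and "e (base x) = 1 \<or> e (base x) = -1"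
  using assms base_range unfolding skew_def by auto

lemma skew_comp:
  assumes f: "skew f s ef cf" and g: "skew g t eg cg" "is_iet g"
  shows "skew (f \<circ> g) (t + s) (\<lambda>u. ef (frac (u + t)) * eg u)
           (\<lambda>u. ef (frac (u + t)) * cg u + cf (frac (u + t)))"
  unfolding skew_def
proof (intro conjI ballI)
  fix u :: real assume "u \<in> {0..<1}"
  moreover have "frac (u + t) \<in> {0..<1}" by (simp add: frac_lt_1)
  ultimately have "ef (frac (u + t)) = 1 \<or> ef (frac (u + t)) = -1" "eg u = 1 \<or> eg u = -1"
    using f g unfolding skew_def by blast+
  then show "ef (frac (u + t)) * eg u = 1 \<or> ef (frac (u + t)) * eg u = -1" by auto
next
  fix x :: real assume x: "x \<in> {0..<1}"
  note gx = skewD[OF g(1) x] and fgx = skewD[OF f iet_maps_to[OF g(2) x]]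
  show "base ((f \<circ> g) x) = frac (base x + (t + s))"
    using fgx(1) gx(1) by (simp add: add.assoc)
  have "(ef (frac (base x + t)) * ((eg (base x) * sheet x + cg (base x)) mod 3) +
      cf (frac (base x + t))) mod 3 =
    (ef (frac (base x + t)) * (eg (base x) * sheet x + cg (base x)) + cf (frac (base x + t))) mod 3"
    by (metis mod_add_left_eq mod_mult_right_eq)
  then show "sheet ((f \<circ> g) x) = (ef (frac (base x + t)) * eg (base x) * sheet x +
      (ef (frac (base x + t)) * cg (base x) + cf (frac (base x + t)))) mod 3"
    using fgx(2) gx by (simp add: algebra_simps)
qed

lemma skew_inv:
  assumes h: "skew h s e c" "is_iet h"
  shows "skew (inv_into UNIV h) (- s) (\<lambda>u. e (frac (u - s))) (\<lambda>u. - (e (frac (u - s)) * c (frac (u - s))))"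
  unfolding skew_def
proof (intro conjI ballI)
  fix u :: real assume "u \<in> {0..<1}"
  show "e (frac (u - s)) = 1 \<or> e (frac (u - s)) = -1"
    using h(1) unfolding skew_def by (simp add: frac_lt_1)
next
  fix y :: real assume y: "y \<in> {0..<1}"
  define x where "x = inv_into UNIV h y"
  have x: "x \<in> {0..<1}" "h x = y"
    unfolding x_def using iet_maps_to[OF iet_inv[OF h(2)] y] iet_bij[OF h(2)]
    by (simp_all add: bij_is_surj f_inv_into_f)
  note hx = skewD[OF h(1) x(1), unfolded x(2)]
  have base_x: "base x = frac (base y - s)"
    using hx(1) base_range[of x] frac_add_simps(1)[of "base x + s" "- s"] by simp
  have "sheet x = (e (base x) * e (base x) * sheet x) mod 3"
    using hx(3) sheet_range[OF x(1)] by auto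
  also have "\<dots> = (e (base x) * (e (base x) * sheet x + c (base x)) + - (e (base x) * c (base x))) mod 3"
    by (simp add: algebra_simps)
  also have "\<dots> = (e (base x) * sheet y + - (e (base x) * c (base x))) mod 3"
    using hx(2) by (metis mod_add_left_eq mod_mult_right_eq)
  finally show "base (inv_into UNIV h y) = frac (base y + - s)"
    and "sheet (inv_into UNIV h y) = (e (frac (base y - s)) * sheet y +
      - (e (frac (base y - s)) * c (frac (base y - s)))) mod 3"
    using base_x unfolding x_def by simp_all
qed

lemma skew_cong:
  assumes "skew h s e c" "\<And>u. u \<in> {0..<1} \<Longrightarrow> frac (u + s') = frac (u + s)"
    and "\<And>u. u \<in> {0..<1} \<Longrightarrow> e' u = e u" "\<And>u. u \<in> {0..<1} \<Longrightarrow> c' u mod 3 = c u mod 3"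
  shows "skew h s' e' c'"
  unfolding skew_def
proof (intro conjI ballI)
  fix u :: real assume "u \<in> {0..<1}"
  then show "e' u = 1 \<or> e' u = -1" using assms(1,3) unfolding skew_def by auto
next
  fix x :: real assume x: "x \<in> {0..<1}"
  have b: "base x \<in> {0..<1}" using base_range by simp
  have "(e' (base x) * sheet x + c' (base x)) mod 3 = (e (base x) * sheet x + c (base x)) mod 3"
    using assms(3,4)[OF b] by (metis mod_add_right_eq)
  then show "base (h x) = frac (base x + s')"
    "sheet (h x) = (e' (base x) * sheet x + c' (base x)) mod 3"
    using skewD[OF assms(1) x] assms(2)[OF b] by simp_all
qed

lemma skew_vertical_comp:
  assumes "skew f 0 ef cf" "skew g 0 eg cg" "is_iet g"
  shows "skew (f \<circ> g) 0 (\<lambda>u. ef u * eg u) (\<lambda>u. ef u * cg u + cf u)"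
  by (rule skew_cong[OF skew_comp[OF assms]]) simp_all

lemma skew_vertical_inv:
  assumes "skew h 0 e c" "is_iet h"
  shows "skew (inv_into UNIV h) 0 e (\<lambda>u. - (e u * c u))"
  by (rule skew_cong[OF skew_inv[OF assms]]) simp_all

lemma skew_rot: "skew (rot s) s (\<lambda>u. 1) (\<lambda>u. 0)"
proof -
  have "base (rot s x) = frac (base x + s) \<and> sheet (rot s x) = sheet x" if "x \<in> {0..<1}" for x
    using that base_range sheet_range[OF that] unfolding rot_def by (simp add: frac_lt_1)
  then show ?thesis unfolding skew_def by simp
qed

lemma skew_fiber_map:
  assumes "\<And>u. e u = 1 \<or> e u = -1" shows "skew (fiber_map e c) 0 e c"
proof -
  have "base (fiber_map e c x) = base x \<and> sheet (fiber_map e c x) = (e (base x) * sheet x + c (base x)) mod 3"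
    if "x \<in> {0..<1}" for x
    using that base_range unfolding fiber_map_def by simp
  then show ?thesis unfolding skew_def using assms base_range by (simp add: frac_eq)
qed

(* The derived series of a group of skew products descends through Skew, Skew_vertical
   and Skew_shift. *)
definition Skew :: "(real \<Rightarrow> real) set" where
  "Skew = {h. is_iet h \<and> (\<exists>s e c. skew h s e c)}"

definition Skew_vertical :: "(real \<Rightarrow> real) set" where
  "Skew_vertical = {h. is_iet h \<and> (\<exists>e c. skew h 0 e c)}"

definition Skew_shift :: "(real \<Rightarrow> real) set" where
  "Skew_shift = {h. is_iet h \<and> (\<exists>c. skew h 0 (\<lambda>u. 1) c)}"

lemma skew_id: "skew id 0 (\<lambda>u. 1) (\<lambda>u. 0)"
  using skew_rot[of 0] by (simp add: rot_0)

lemma subgroup_Skew: "subgroup Skew IET"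
proof (rule IET.subgroupI)
  show "Skew \<noteq> {}" unfolding Skew_def using skew_id iet_id by blast
  show "inv\<^bsub>IET\<^esub> a \<in> Skew" if "a \<in> Skew" for a
    using that skew_inv iet_inv unfolding Skew_def by (fastforce simp: inv_IET)
  show "a \<otimes>\<^bsub>IET\<^esub> b \<in> Skew" if "a \<in> Skew" "b \<in> Skew" for a b
    using that skew_comp iet_comp unfolding Skew_def by fastforce
qed (auto simp: Skew_def)

lemma subgroup_Skew_vertical: "subgroup Skew_vertical IET"
proof (rule IET.subgroupI)
  show "Skew_vertical \<noteq> {}" unfolding Skew_vertical_def using skew_id iet_id by blast
  show "inv\<^bsub>IET\<^esub> a \<in> Skew_vertical" if "a \<in> Skew_vertical" for a
    using that skew_vertical_inv iet_inv unfolding Skew_vertical_def by (fastforce simp: inv_IET)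
  show "a \<otimes>\<^bsub>IET\<^esub> b \<in> Skew_vertical" if "a \<in> Skew_vertical" "b \<in> Skew_vertical" for a b
    using that skew_vertical_comp iet_comp unfolding Skew_vertical_def by fastforce
qed (auto simp: Skew_vertical_def)

lemma subgroup_Skew_shift: "subgroup Skew_shift IET"
proof (rule IET.subgroupI)
  show "Skew_shift \<noteq> {}" unfolding Skew_shift_def using skew_id iet_id by blast
  show "inv\<^bsub>IET\<^esub> a \<in> Skew_shift" if "a \<in> Skew_shift" for a
    using that skew_vertical_inv iet_inv unfolding Skew_shift_def by (fastforce simp: inv_IET)
  show "a \<otimes>\<^bsub>IET\<^esub> b \<in> Skew_shift" if "a \<in> Skew_shift" "b \<in> Skew_shift" for a b
    using that skew_vertical_comp[of a "\<lambda>u. 1" _ b "\<lambda>u. 1"] iet_comp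
    unfolding Skew_shift_def by fastforce
qed (auto simp: Skew_shift_def)

lemma commutator_Skew:
  assumes "a \<in> Skew" "b \<in> Skew"
  shows "a \<otimes>\<^bsub>IET\<^esub> b \<otimes>\<^bsub>IET\<^esub> inv\<^bsub>IET\<^esub> a \<otimes>\<^bsub>IET\<^esub> inv\<^bsub>IET\<^esub> b \<in> Skew_vertical"
proof -
  obtain s ea ca t eb cb where a: "skew a s ea ca" "is_iet a" and b: "skew b t eb cb" "is_iet b"
    using assms unfolding Skew_def by auto
  note iets = iet_inv[OF a(2)] iet_inv[OF b(2)]
  obtain e c where "skew (a \<circ> b \<circ> inv_into UNIV a \<circ> inv_into UNIV b) (- t + (- s + (t + s))) e c"
    using skew_comp[OF skew_comp[OF skew_comp[OF a(1) b] skew_inv[OF a] iets(1)] skew_inv[OF b] iets(2)]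
    by blast
  then have "skew (a \<circ> b \<circ> inv_into UNIV a \<circ> inv_into UNIV b) 0 e c"
    by (rule skew_cong) simp_all
  then show ?thesis
    unfolding Skew_vertical_def commutator_IET[OF a(2) b(2)] using a(2) b(2) iets by (auto intro!: iet_comp)
qed

lemma commutator_Skew_vertical:
  assumes "a \<in> Skew_vertical" "b \<in> Skew_vertical"
  shows "a \<otimes>\<^bsub>IET\<^esub> b \<otimes>\<^bsub>IET\<^esub> inv\<^bsub>IET\<^esub> a \<otimes>\<^bsub>IET\<^esub> inv\<^bsub>IET\<^esub> b \<in> Skew_shift"
proof -
  obtain ea ca eb cb where a: "skew a 0 ea ca" "is_iet a" and b: "skew b 0 eb cb" "is_iet b"
    using assms unfolding Skew_vertical_def by auto
  note iets = iet_inv[OF a(2)] iet_inv[OF b(2)]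
  obtain c where comm: "skew (a \<circ> b \<circ> inv_into UNIV a \<circ> inv_into UNIV b) 0 (\<lambda>u. ea u * eb u * ea u * eb u) c"
    using skew_vertical_comp[OF skew_vertical_comp[OF skew_vertical_comp[OF a(1) b]
        skew_vertical_inv[OF a] iets(1)] skew_vertical_inv[OF b] iets(2)]
    by blast
  have "skew (a \<circ> b \<circ> inv_into UNIV a \<circ> inv_into UNIV b) 0 (\<lambda>u. 1) c"
  proof (rule skew_cong[OF comm])
    fix u :: real assume "u \<in> {0..<1}"
    then have "ea u = 1 \<or> ea u = -1" "eb u = 1 \<or> eb u = -1"
      using a(1) b(1) unfolding skew_def by blast+
    then show "1 = ea u * eb u * ea u * eb u" by auto
  qed simp_all
  then show ?thesis
    unfolding Skew_shift_def commutator_IET[OF a(2) b(2)] using a(2) b(2) iets by (auto intro!: iet_comp)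
qed

lemma Skew_shift_commute:
  assumes "a \<in> Skew_shift" "b \<in> Skew_shift"
  shows "a \<circ> b = b \<circ> a"
proof
  fix x
  obtain ca cb where a: "skew a 0 (\<lambda>u. 1) ca" "is_iet a" and b: "skew b 0 (\<lambda>u. 1) cb" "is_iet b"
    using assms unfolding Skew_shift_def by auto
  show "(a \<circ> b) x = (b \<circ> a) x"
  proof (cases "x \<in> {0..<1}")
    case True
    have "base (a (b x)) = base x" "base (b (a x)) = base x"
      "sheet (a (b x)) = (sheet x + cb (base x) + ca (base x)) mod 3"
      "sheet (b (a x)) = (sheet x + cb (base x) + ca (base x)) mod 3"
      using skewD[OF a(1)] skewD[OF b(1)] iet_maps_to a(2) b(2) True base_range
      by (simp_all add: frac_eq mod_add_left_eq mod_add_right_eq algebra_simps)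
    then show ?thesis by (metis comp_apply sheet_point_sheet_base)
  qed (simp add: iet_fixes a(2) b(2))
qed

lemma commutator_Skew_shift:
  assumes "a \<in> Skew_shift" "b \<in> Skew_shift"
  shows "a \<otimes>\<^bsub>IET\<^esub> b \<otimes>\<^bsub>IET\<^esub> inv\<^bsub>IET\<^esub> a \<otimes>\<^bsub>IET\<^esub> inv\<^bsub>IET\<^esub> b = \<one>\<^bsub>IET\<^esub>"
proof -
  have "a \<in> carrier IET" "b \<in> carrier IET" using assms unfolding Skew_shift_def by auto
  moreover have "a \<otimes>\<^bsub>IET\<^esub> b = b \<otimes>\<^bsub>IET\<^esub> a" using Skew_shift_commute[OF assms] by simp
  ultimately show ?thesis by (metis IET.inv_closed IET.m_assoc IET.m_closed IET.r_inv IET.r_one)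
qed

lemma third_derived_Skew:
  assumes "J \<subseteq> Skew"
  shows "(derived IET ^^ 3) J = {\<one>\<^bsub>IET\<^esub>}"
proof -
  have "derived IET J \<subseteq> Skew_vertical"
    using assms commutator_Skew by (intro derived_minimal[OF group_IET] subgroup_Skew_vertical) blast
  then have "derived IET (derived IET J) \<subseteq> Skew_shift"
    using commutator_Skew_vertical by (intro derived_minimal[OF group_IET] subgroup_Skew_shift) blast
  then have "derived IET (derived IET (derived IET J)) \<subseteq> {\<one>\<^bsub>IET\<^esub>}"
    using commutator_Skew_shift by (intro derived_minimal[OF group_IET] IET.triv_subgroup) blast
  moreover have "\<one>\<^bsub>IET\<^esub> \<in> derived IET (derived IET (derived IET J))"
    unfolding derived_def by (rule generate.one)
  ultimately show ?thesis by (auto simp: numeral_3_eq_3)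
qed

section \<open>The groups Gamma b\<close>

definition alpha :: real where
  "alpha = (SOME a. a \<in> {1/2<..<5/8} \<and> a \<notin> \<rat>)"

lemma alpha_bounds_irrational: "1/2 < alpha" "alpha < 5/8" "alpha \<notin> \<rat>"
proof -
  have "\<not> {1/2<..<5/8::real} \<subseteq> \<rat>"
    using countable_rat countable_subset uncountable_open_interval[of "1/2::real" "5/8"] by auto
  then have "\<exists>a. a \<in> {1/2<..<5/8::real} \<and> a \<notin> \<rat>" by blast
  then have "alpha \<in> {1/2<..<5/8} \<and> alpha \<notin> \<rat>" unfolding alpha_def by (rule someI_ex)
  then show "1/2 < alpha" "alpha < 5/8" "alpha \<notin> \<rat>" by auto
qed

definition reflection :: "real \<Rightarrow> int \<Rightarrow> real \<Rightarrow> real" where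
  "reflection a k = fiber_map (\<lambda>t. if t \<in> {a..<a + 1/4} then -1 else 1) (\<lambda>t. if t \<in> {a..<a + 1/4} then k else 0)"

lemma reflection_sheet_point:
  "0 \<le> j \<Longrightarrow> j \<le> 2 \<Longrightarrow> 0 \<le> t \<Longrightarrow> t < 1 \<Longrightarrow>
     reflection a k (sheet_point j t) = sheet_point (if t \<in> {a..<a + 1/4} then (k - j) mod 3 else j) t"
  unfolding reflection_def by simp

lemma reflection_iet: "is_iet (reflection a k)"
  unfolding reflection_def
proof (rule fiber_map_iet[where D = "{a, a + 1/4}"])
  show "constant_between (\<lambda>t. if t \<in> {a..<a + 1/4} then -1 else 1 :: int) {a, a + 1/4}"
    by (rule constant_between_interval)
  show "constant_between (\<lambda>t. if t \<in> {a..<a + 1/4} then k else 0) {a, a + 1/4}"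
    by (rule constant_between_interval)
qed auto

lemma reflection_involution: "reflection a k \<circ> reflection a k = id"
  unfolding reflection_def by (rule ext) (simp add: fiber_map_cancel)

lemma inv_reflection: "inv\<^bsub>IET\<^esub> (reflection a k) = reflection a k"
  by (rule inv_IET_eqI[OF reflection_iet reflection_involution reflection_iet])

lemma skew_reflection: "\<exists>e c. skew (reflection a k) 0 e c"
  unfolding reflection_def by (rule exI, rule exI, rule skew_fiber_map) simp

definition Gamma :: "real \<Rightarrow> (real \<Rightarrow> real) set" where
  "Gamma b = generate IET {rot alpha, reflection 0 0, reflection b 1}"

lemma Gamma_generators_iet: "{rot alpha, reflection 0 0, reflection b 1} \<subseteq> carrier IET"
  by (simp add: rot_iet reflection_iet)

lemma Gamma_three_generated: "\<exists>x y z. {x, y, z} \<subseteq> carrier IET \<and> Gamma b = generate IET {x, y, z}"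
  using Gamma_generators_iet unfolding Gamma_def by blast

lemma subgroup_Gamma: "subgroup (Gamma b) IET"
  unfolding Gamma_def by (rule IET.generate_is_subgroup[OF Gamma_generators_iet])

lemma generators_in_Gamma: "rot alpha \<in> Gamma b" "reflection 0 0 \<in> Gamma b" "reflection b 1 \<in> Gamma b"
  unfolding Gamma_def by (auto intro: generate.incl)

lemma Gamma_subset_Skew: "Gamma b \<subseteq> Skew"
  unfolding Gamma_def
proof (rule IET.generate_subgroup_incl[OF _ subgroup_Skew])
  show "{rot alpha, reflection 0 0, reflection b 1} \<subseteq> Skew"
    using skew_rot skew_reflection rot_iet reflection_iet unfolding Skew_def by blast
qed

lemma Gamma_second_derived_nontrivial:
  assumes b: "0 \<le> b" "b \<le> 1/8"
  shows "\<exists>d \<in> (derived IET ^^ 2) (Gamma b). d \<noteq> id"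
proof -
  define \<rho> where "\<rho> = rot alpha"
  define f where "f = reflection 0 0"
  define g where "g = reflection b 1"
  define comm where "comm x y = x \<otimes>\<^bsub>IET\<^esub> y \<otimes>\<^bsub>IET\<^esub> inv\<^bsub>IET\<^esub> x \<otimes>\<^bsub>IET\<^esub> inv\<^bsub>IET\<^esub> y" for x y
  define \<kappa> where "\<kappa> h = \<rho> \<circ> h \<circ> rot (- alpha)" for h
  define d where "d = comm (comm \<rho> f) (comm \<rho> g)"
  have "comm \<rho> f \<in> derived IET (Gamma b)" "comm \<rho> g \<in> derived IET (Gamma b)"
    unfolding comm_def \<rho>_def f_def g_def derived_def using generators_in_Gamma
    by (blast intro: generate.incl)+
  then have "d \<in> derived IET (derived IET (Gamma b))"
    unfolding derived_def[of IET "derived IET (Gamma b)"] d_def comm_def[of "comm \<rho> f"]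
    by (intro generate.incl) blast
  then have d_derived: "d \<in> (derived IET ^^ 2) (Gamma b)" by (simp add: numeral_2_eq_2)
  \<comment> \<open>The rotation moves the base point b to b - alpha + 1, outside the supports of f and g.\<close>
  have conj: "\<kappa> h (sheet_point j b) = sheet_point j b" if "h \<in> {f, g}" "0 \<le> j" "j \<le> 2" for h j
  proof -
    have p: "frac (b - alpha) = b - alpha + 1" using b alpha_bounds_irrational by (simp add: frac_unique_iff)
    then have "h (sheet_point j (b - alpha + 1)) = sheet_point j (b - alpha + 1)"
      using that b alpha_bounds_irrational unfolding f_def g_def by (auto simp: reflection_sheet_point)
    moreover have "frac (b - alpha + 1 + alpha) = b" using b by (simp add: frac_1_eq frac_eq)
    ultimately show ?thesis using that b alpha_bounds_irrational p unfolding \<kappa>_def \<rho>_def by simp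
  qed
  have comm_eq: "comm \<rho> h = \<kappa> h \<circ> h" "inv\<^bsub>IET\<^esub> (\<kappa> h \<circ> h) = h \<circ> \<kappa> h" if "h \<in> {f, g}" for h
    using that unfolding comm_def \<kappa>_def \<rho>_def f_def g_def
    by (auto simp: inv_IET_comp inv_rot inv_reflection rot_iet reflection_iet iet_comp comp_assoc)
  have fiber: "f (sheet_point j b) = sheet_point ((- j) mod 3) b"
    "g (sheet_point j b) = sheet_point ((1 - j) mod 3) b" if "0 \<le> j" "j \<le> 2" for j
    using that b unfolding f_def g_def by (simp_all add: reflection_sheet_point)
  have "d (sheet_point 0 b) = sheet_point 1 b"
    unfolding d_def comm_def[of "comm \<rho> f"] by (simp add: comm_eq conj fiber)
  moreover have "sheet_point 1 b \<noteq> sheet_point 0 b" using b by (simp add: sheet_point_eq_iff)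
  ultimately show ?thesis using d_derived by (metis id_apply)
qed

lemma derived_length_Gamma:
  assumes "0 \<le> b" "b \<le> 1/8"
  shows "derived_length_eq (Gamma b) 3"
proof -
  obtain d where "d \<in> (derived IET ^^ 2) (Gamma b)" "d \<noteq> id"
    using Gamma_second_derived_nontrivial[OF assms] by blast
  moreover have "(derived IET ^^ Suc 2) (Gamma b) = {\<one>\<^bsub>IET\<^esub>}"
    using third_derived_Skew[OF Gamma_subset_Skew] by simp
  ultimately show ?thesis using derived_length_eqI[OF subgroup_Gamma, of 2] by simp
qed

section \<open>Telling the groups Gamma b apart\<close>

definition overlaps :: "real \<Rightarrow> real \<Rightarrow> bool" where
  "overlaps s b \<longleftrightarrow> (\<exists>u\<in>{0..<1/4}. frac (u - s) \<in> {b..<b + 1/4})"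

lemma rot_conj_reflection_sheet_point:
  assumes "0 \<le> j" "j \<le> 2" "0 \<le> u" "u < 1"
  shows "(rot s \<circ> reflection b 1 \<circ> rot (- s)) (sheet_point j u) =
    sheet_point (if frac (u - s) \<in> {b..<b + 1/4} then (1 - j) mod 3 else j) u"
  using assms
  by (cases "frac (u - s) \<in> {b..<b + 1/4}") (simp_all add: reflection_sheet_point frac_lt_1 frac_eq)

lemma reflection_commute_iff:
  "reflection 0 0 \<circ> (rot s \<circ> reflection b 1 \<circ> rot (- s)) = (rot s \<circ> reflection b 1 \<circ> rot (- s)) \<circ> reflection 0 0
     \<longleftrightarrow> \<not> overlaps s b"
proof -
  define f where "f = reflection 0 0"
  define w where "w = rot s \<circ> reflection b 1 \<circ> rot (- s)"
  have w: "w (sheet_point j u) = sheet_point (if frac (u - s) \<in> {b..<b + 1/4} then (1 - j) mod 3 else j) u"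
    if "0 \<le> j" "j \<le> 2" "0 \<le> u" "u < 1" for j u
    unfolding w_def using that by (rule rot_conj_reflection_sheet_point)
  have f: "f (sheet_point j u) = sheet_point (if u < 1/4 then (- j) mod 3 else j) u"
    if "0 \<le> j" "j \<le> 2" "0 \<le> u" "u < 1" for j u
    unfolding f_def using that by (simp add: reflection_sheet_point)
  have "f \<circ> w = w \<circ> f \<longleftrightarrow> \<not> overlaps s b"
  proof
    assume comm: "f \<circ> w = w \<circ> f"
    show "\<not> overlaps s b"
    proof
      assume "overlaps s b"
      then obtain u where u: "0 \<le> u" "u < 1/4" "frac (u - s) \<in> {b..<b + 1/4}"
        unfolding overlaps_def by auto
      have "f (w (sheet_point 0 u)) = sheet_point 2 u" using u by (simp add: w f)
      moreover have "w (f (sheet_point 0 u)) = sheet_point 1 u" using u by (simp add: w f)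
      ultimately show False using fun_cong[OF comm, of "sheet_point 0 u"] u by (simp add: sheet_point_eq_iff)
    qed
  next
    assume no_overlap: "\<not> overlaps s b"
    show "f \<circ> w = w \<circ> f"
    proof
      fix x
      show "(f \<circ> w) x = (w \<circ> f) x"
      proof (cases "x \<in> {0..<1}")
        case True
        then obtain j u where x: "x = sheet_point j u" "0 \<le> j" "j \<le> 2" "0 \<le> u" "u < 1"
          by (rule sheet_point_cases)
        show ?thesis
        proof (cases "u < 1/4")
          case True
          then have "frac (u - s) \<notin> {b..<b + 1/4}"
            using no_overlap x(4) unfolding overlaps_def by auto
          then show ?thesis using x True by (simp add: w f del: atLeastLessThan_iff)
        next
          case False
          then show ?thesis
            using x by (cases "frac (u - s) \<in> {b..<b + 1/4}") (simp_all add: w f del: atLeastLessThan_iff)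
        qed
      next
        case False
        then show ?thesis unfolding f_def w_def by (simp add: reflection_def)
      qed
    qed
  qed
  then show ?thesis unfolding f_def w_def .
qed

lemma commuting_conjugates_Gamma:
  "commuting_conjugates IET (rot alpha) (reflection 0 0) (reflection b 1) = {n. \<not> overlaps (real n * alpha) b}"
  unfolding commuting_conjugates_def rot_pow
  by (simp add: inv_rot reflection_commute_iff)

lemma overlaps_separate:
  assumes "0 \<le> b" "b < b'" "b' \<le> 1/8"
  shows "\<exists>n. \<not> overlaps (real n * alpha) b \<and> overlaps (real n * alpha) b'"
proof -
  have irrational: "- alpha \<notin> \<rat>" using alpha_bounds_irrational(3) by (metis minus_minus Rats_minus_iff)
  have target: "0 \<le> (b + b') / 2 + 1/4" "(b + b') / 2 + 1/4 \<le> 1" "(b' - b) / 2 > 0"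
    using assms by (auto simp: field_simps)
  obtain n :: nat where "n > 0" "\<bar>frac (real n * - alpha) - ((b + b') / 2 + 1/4)\<bar> < (b' - b) / 2"
    using Kronecker_approx_1_explicit[OF irrational target] by blast
  moreover define d where "d = frac (real n * - alpha)"
  ultimately have d: "b + 1/4 < d" "d < b' + 1/4" by (auto simp: abs_less_iff field_simps)
  \<comment> \<open>Rotating by n alpha carries [0, 1/4) onto [d, d + 1/4), which misses [b, b + 1/4),
    while d itself lies in [b', b' + 1/4).\<close>
  have shift: "frac (u - real n * alpha) = u + d" if "0 \<le> u" "u < 1/4" for u
  proof -
    have "u - real n * alpha - (u + d) = of_int \<lfloor>real n * - alpha\<rfloor>"
      unfolding d_def frac_def by simp
    then show ?thesis using that d assms by (simp add: frac_unique_iff)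
  qed
  have "\<not> overlaps (real n * alpha) b" unfolding overlaps_def using shift d by auto
  moreover have "overlaps (real n * alpha) b'" unfolding overlaps_def using shift[of 0] d assms by force
  ultimately show ?thesis by blast
qed

lemma inj_on_commuting_conjugates_Gamma:
  "inj_on (\<lambda>b. commuting_conjugates IET (rot alpha) (reflection 0 0) (reflection b 1)) {0..1/8}"
proof (rule linorder_inj_onI')
  fix b b' :: real assume "b \<in> {0..1/8}" "b' \<in> {0..1/8}" "b < b'"
  then obtain n where "\<not> overlaps (real n * alpha) b" "overlaps (real n * alpha) b'"
    using overlaps_separate by auto
  then show "commuting_conjugates IET (rot alpha) (reflection 0 0) (reflection b 1) \<noteq>
      commuting_conjugates IET (rot alpha) (reflection 0 0) (reflection b' 1)"
    unfolding commuting_conjugates_Gamma by blast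
qed

lemma group_Gamma: "group (IET\<lparr>carrier := Gamma b\<rparr>)"
  by (rule IET.subgroup_imp_group[OF subgroup_Gamma])

lemma countable_Gamma: "countable (Gamma b)"
  unfolding Gamma_def by (rule countable_generate[OF group_IET _ Gamma_generators_iet]) simp

lemma countable_Gamma_iso_class:
  "countable {b' \<in> {0..1/8}. IET\<lparr>carrier := Gamma b'\<rparr> \<cong> IET\<lparr>carrier := Gamma b\<rparr>}"
  (is "countable ?C")
proof -
  define T where "T b = commuting_conjugates IET (rot alpha) (reflection 0 0) (reflection b 1)" for b
  have "T b' \<in> commuting_conjugate_sets (IET\<lparr>carrier := Gamma b\<rparr>)" if "b' \<in> ?C" for b'
  proof -
    have "T b' = commuting_conjugates (IET\<lparr>carrier := Gamma b'\<rparr>) (rot alpha) (reflection 0 0) (reflection b' 1)"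
      unfolding T_def using commuting_conjugates_subgroup[OF group_IET subgroup_Gamma] generators_in_Gamma by simp
    then have "T b' \<in> commuting_conjugate_sets (IET\<lparr>carrier := Gamma b'\<rparr>)"
      unfolding commuting_conjugate_sets_def using generators_in_Gamma by force
    then show ?thesis using commuting_conjugate_sets_iso[OF group_Gamma group_Gamma] that by blast
  qed
  then have "countable (T ` ?C)"
    using countable_subset countable_commuting_conjugate_sets countable_Gamma
    by (metis (no_types, lifting) image_subset_iff partial_object.select_convs(1) partial_object.surjective
        partial_object.update_convs(1))
  moreover have "inj_on T ?C"
    using inj_on_commuting_conjugates_Gamma unfolding T_def by (rule inj_on_subset) auto
  ultimately show ?thesis by (rule countable_image_inj_on)
qed

lemma Gamma_non_isomorphic_family:
  "\<exists>V\<subseteq>{0..1/8}. uncountable V \<and>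
     (\<forall>b\<in>V. \<forall>b'\<in>V. IET\<lparr>carrier := Gamma b\<rparr> \<cong> IET\<lparr>carrier := Gamma b'\<rparr> \<longrightarrow> b = b')"
proof -
  define U where "U = {0..1/8::real}"
  define r where "r = {(b, b'). b \<in> U \<and> b' \<in> U \<and> IET\<lparr>carrier := Gamma b\<rparr> \<cong> IET\<lparr>carrier := Gamma b'\<rparr>}"
  have "equiv U r"
    unfolding r_def using group.iso_sym[OF group_Gamma] iso_trans
    by (intro equivI) (auto simp: refl_on_def sym_def trans_def intro: iso_refl)
  moreover have "uncountable U" unfolding U_def by (simp add: uncountable_closed_interval)
  moreover have "countable X" if X: "X \<in> U // r" for X
  proof -
    obtain b where b: "X = r `` {b}" "b \<in> U" using X by (rule quotientE)
    then have "X \<subseteq> {b' \<in> {0..1/8}. IET\<lparr>carrier := Gamma b'\<rparr> \<cong> IET\<lparr>carrier := Gamma b\<rparr>}"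
      using group.iso_sym[OF group_Gamma] unfolding U_def r_def by auto
    then show ?thesis using countable_Gamma_iso_class countable_subset by blast
  qed
  ultimately have "\<exists>V\<subseteq>U. uncountable V \<and> (\<forall>b\<in>V. \<forall>b'\<in>V. (b, b') \<in> r \<longrightarrow> b = b')"
    by (rule uncountable_transversal)
  then show ?thesis unfolding U_def r_def by blast
qed

theorem mainTheorem4:
  shows "\<exists>S :: (real \<Rightarrow> real) set set.
           uncountable S \<and>
           (\<forall>H\<in>S. subgroup H IET \<and>
                   (\<exists>a b c. {a, b, c} \<subseteq> carrier IET \<and> H = generate IET {a, b, c}) \<and>
                   derived_length_eq H 3) \<and>
           (\<forall>H1\<in>S. \<forall>H2\<in>S. H1 \<noteq> H2 \<longrightarrow>
                   \<not> (IET\<lparr>carrier := H1\<rparr> \<cong> IET\<lparr>carrier := H2\<rparr>))"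
proof -
  obtain V where V: "V \<subseteq> {0..1/8}" "uncountable V"
    "\<forall>b\<in>V. \<forall>b'\<in>V. IET\<lparr>carrier := Gamma b\<rparr> \<cong> IET\<lparr>carrier := Gamma b'\<rparr> \<longrightarrow> b = b'"
    using Gamma_non_isomorphic_family by blast
  have "inj_on Gamma V" using V(3) by (intro inj_onI) (metis iso_refl)
  then have uncountable: "uncountable (Gamma ` V)" using V(2) countable_image_inj_on by blast
  have properties: "\<forall>H\<in>Gamma ` V. subgroup H IET \<and>
      (\<exists>a b c. {a, b, c} \<subseteq> carrier IET \<and> H = generate IET {a, b, c}) \<and> derived_length_eq H 3"
    using V(1) subgroup_Gamma Gamma_three_generated derived_length_Gamma by auto
  have non_isomorphic: "\<forall>H1\<in>Gamma ` V. \<forall>H2\<in>Gamma ` V. H1 \<noteq> H2 \<longrightarrow>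
      \<not> (IET\<lparr>carrier := H1\<rparr> \<cong> IET\<lparr>carrier := H2\<rparr>)"
    using V(3) by blast
  show ?thesis by (intro exI[of _ "Gamma ` V"] conjI uncountable properties non_isomorphic)
qed

end
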